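(* For every $T$, every sequence of forecasts $\mathbf p\in[0,1]^T$ and outcomes $\mathbf x\in\{0,1\}^T$, there exist a finite action set $\mathcal A$ and a bounded utility function $u:\mathcal A\times\{0,1\}\to[-1,1]$ such that $\mathrm{AgentSwapReg}_u(\mathbf p,\mathbf x)\ge\mathrm{Cal}_2(\mathbf p,\mathbf x)$.
   Context: For forecast $p$, an agent with action set $\mathcal A$ and utility $u$ plays $a(p)\in\arg\max_{a\in\mathcal A}\mathbb E_{x\sim\mathrm{Ber}(p)}[u(a,x)]$. The agent swap regret is $\mathrm{AgentSwapReg}_u(\mathbf p,\mathbf x)=\max_{\pi:\mathcal A\to\mathcal A}\sum_{t=1}^T u(\pi(a(p_t)),x_t)-\sum_{t=1}^T u(a(p_t),x_t)$. With $n_p=|\{t:p_t=p\}|$, $m_p=|\{t:p_t=p,\ x_t=1\}|$, the $L_2$-calibration error is $\mathrm{Cal}_2(\mathbf p,\mathbf x)=\sum_p n_p(p-m_p/n_p)^2$ (sum over $p$ with $n_p>0$). *)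

theory Defs
  imports Complex_Main
begin

text \<open>Actions are real numbers (any finite action set embeds into a finite set of reals).
  Outcomes are reals in {0,1}; the utility u a y is only relevant for y in {0,1}.\<close>

definition exp_util :: "(real \<Rightarrow> real \<Rightarrow> real) \<Rightarrow> real \<Rightarrow> real \<Rightarrow> real" where
  "exp_util u a q = (1 - q) * u a 0 + q * u a 1"

definition is_best_response ::
  "real set \<Rightarrow> (real \<Rightarrow> real \<Rightarrow> real) \<Rightarrow> real \<Rightarrow> real \<Rightarrow> bool" where
  "is_best_response A u q a \<longleftrightarrow> a \<in> A \<and> (\<forall>b\<in>A. exp_util u b q \<le> exp_util u a q)"

definition agent_swap_reg ::
  "real set \<Rightarrow> (real \<Rightarrow> real \<Rightarrow> real) \<Rightarrow> (real \<Rightarrow> real) \<Rightarrow> (nat \<Rightarrow> real) \<Rightarrow> (nat \<Rightarrow> real) \<Rightarrow> nat \<Rightarrow> real" where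
  "agent_swap_reg A u br p x T =
     Max {(\<Sum>t<T. u (\<pi> (br (p t))) (x t)) | \<pi>. \<forall>a\<in>A. \<pi> a \<in> A}
     - (\<Sum>t<T. u (br (p t)) (x t))"

definition cnt_n :: "(nat \<Rightarrow> real) \<Rightarrow> nat \<Rightarrow> real \<Rightarrow> nat" where
  "cnt_n p T q = card {t. t < T \<and> p t = q}"

definition cnt_m :: "(nat \<Rightarrow> real) \<Rightarrow> (nat \<Rightarrow> real) \<Rightarrow> nat \<Rightarrow> real \<Rightarrow> nat" where
  "cnt_m p x T q = card {t. t < T \<and> p t = q \<and> x t = 1}"

definition cal2 :: "(nat \<Rightarrow> real) \<Rightarrow> (nat \<Rightarrow> real) \<Rightarrow> nat \<Rightarrow> real" where
  "cal2 p x T = (\<Sum>q\<in>p ` {..<T}.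
      real (cnt_n p T q) * (q - real (cnt_m p x T q) / real (cnt_n p T q))^2)"

end

theory Submission
  imports Defs "HOL-Library.FuncSet"
begin

text \<open>Take the utility u a y = 1 - (a - y)^2 of the squared loss, with actions the forecasts
  themselves and their empirical frequencies. Since the squared loss is a proper scoring rule,
  the agent's best response to a forecast q is q itself. Swapping each forecast q for the
  empirical frequency of outcomes on the rounds where q was made improves the total utility,
  by the bias-variance identity, by exactly n_q (q - m_q/n_q)^2, and summing over q gives the
  calibration error.\<close>

definition squared_loss_utility :: "real \<Rightarrow> real \<Rightarrow> real" where
  "squared_loss_utility a y = 1 - (a - y)^2"

lemma exp_util_squared_loss_utility:
  "exp_util squared_loss_utility a q = 1 - (a - q)^2 - q * (1 - q)"
  by (simp add: exp_util_def squared_loss_utility_def power2_eq_square algebra_simps)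

lemma best_response_squared_loss_utility:
  assumes "q \<in> A" and "is_best_response A squared_loss_utility q b"
  shows "b = q"
proof -
  have "exp_util squared_loss_utility q q \<le> exp_util squared_loss_utility b q"
    using assms unfolding is_best_response_def by blast
  then have "(b - q)^2 \<le> 0"
    by (simp add: exp_util_squared_loss_utility)
  then show ?thesis by simp
qed

lemma abs_squared_loss_utility_le_1:
  fixes a y :: real
  assumes "0 \<le> a" "a \<le> 1" "0 \<le> y" "y \<le> 1"
  shows "\<bar>squared_loss_utility a y\<bar> \<le> 1"
proof -
  have "(a - y)^2 \<le> 1"
    using assms by (simp add: abs_square_le_1)
  then show ?thesis by (simp add: squared_loss_utility_def)
qed

lemma sum_sq_diff_mean:
  fixes S :: "'a set" and x :: "'a \<Rightarrow> real" and q :: real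
  defines "\<mu> \<equiv> (\<Sum>t\<in>S. x t) / real (card S)"
  shows "(\<Sum>t\<in>S. (q - x t)^2 - (\<mu> - x t)^2) = card S * (q - \<mu>)^2"
proof (cases "card S = 0")
  case True
  then have "S = {} \<or> infinite S" by auto
  then show ?thesis using True by auto
next
  case False
  have "(\<Sum>t\<in>S. (q - x t)^2 - (\<mu> - x t)^2)
      = (\<Sum>t\<in>S. (q - \<mu>) * (q + \<mu>) - 2 * (q - \<mu>) * x t)"
    by (rule sum.cong) (auto simp: power2_eq_square algebra_simps)
  also have "\<dots> = card S * (q - \<mu>) * (q + \<mu>) - 2 * (q - \<mu>) * (\<Sum>t\<in>S. x t)"
    by (simp add: sum_subtractf sum_distrib_left)
  also have "(\<Sum>t\<in>S. x t) = card S * \<mu>"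
    using False by (simp add: \<mu>_def)
  also have "card S * (q - \<mu>) * (q + \<mu>) - 2 * (q - \<mu>) * (card S * \<mu>) = card S * (q - \<mu>)^2"
    by (simp add: power2_eq_square algebra_simps)
  finally show ?thesis .
qed

lemma sum_binary_outcomes_eq_cnt_m:
  assumes "\<forall>t<T. x t = 0 \<or> x t = 1"
  shows "(\<Sum>t | t < T \<and> p t = q. x t) = real (cnt_m p x T q)"
proof -
  have "(\<Sum>t | t < T \<and> p t = q. x t) = (\<Sum>t | t < T \<and> p t = q. if x t = 1 then 1 else 0)"
    by (rule sum.cong) (use assms in auto)
  also have "\<dots> = real (card {t. t < T \<and> p t = q \<and> x t = 1})"
    by (simp add: sum.If_cases Int_def conj_assoc)
  finally show ?thesis by (simp add: cnt_m_def)
qed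

lemma cnt_m_le_cnt_n: "cnt_m p x T q \<le> cnt_n p T q"
  unfolding cnt_m_def cnt_n_def by (rule card_mono) auto

definition empirical_frequency :: "(nat \<Rightarrow> real) \<Rightarrow> (nat \<Rightarrow> real) \<Rightarrow> nat \<Rightarrow> real \<Rightarrow> real" where
  "empirical_frequency p x T q = real (cnt_m p x T q) / real (cnt_n p T q)"

lemma empirical_frequency_nonneg: "0 \<le> empirical_frequency p x T q"
  by (simp add: empirical_frequency_def)

lemma empirical_frequency_le_1: "empirical_frequency p x T q \<le> 1"
  using cnt_m_le_cnt_n[of p x T q]
  by (cases "cnt_n p T q = 0") (simp_all add: empirical_frequency_def divide_le_eq_1)

lemma sum_sq_diff_empirical_frequency_eq_cal2:
  fixes p x :: "nat \<Rightarrow> real"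
  assumes "\<forall>t<T. x t = 0 \<or> x t = 1"
  shows "(\<Sum>t<T. (p t - x t)^2 - (empirical_frequency p x T (p t) - x t)^2) = cal2 p x T"
proof -
  let ?fr = "empirical_frequency p x T"
  have "(\<Sum>t<T. (p t - x t)^2 - (?fr (p t) - x t)^2)
      = (\<Sum>q\<in>p ` {..<T}. \<Sum>t | t < T \<and> p t = q. (q - x t)^2 - (?fr q - x t)^2)"
    by (subst sum.image_gen[where g = p]) (auto intro!: sum.cong)
  also have "\<dots> = (\<Sum>q\<in>p ` {..<T}. real (cnt_n p T q) * (q - ?fr q)^2)"
    using sum_sq_diff_mean[where S = "{t. t < T \<and> p t = _}" and x = x]
    by (simp add: empirical_frequency_def sum_binary_outcomes_eq_cnt_m[OF assms(1)] cnt_n_def)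
  finally show ?thesis by (simp add: cal2_def empirical_frequency_def)
qed

lemma agent_swap_reg_ge_swap:
  assumes "finite A" and "\<forall>t<T. br (p t) \<in> A" and "\<forall>a\<in>A. \<pi> a \<in> A"
  shows "(\<Sum>t<T. u (\<pi> (br (p t))) (x t)) - (\<Sum>t<T. u (br (p t)) (x t))
           \<le> agent_swap_reg A u br p x T"
proof -
  let ?S = "{(\<Sum>t<T. u (\<pi>' (br (p t))) (x t)) | \<pi>'. \<forall>a\<in>A. \<pi>' a \<in> A}"
  \<comment> \<open>Max is over a finite set: a swap's value only depends on the T actions it produces.\<close>
  have "?S \<subseteq> (\<lambda>g. \<Sum>t<T. u (g t) (x t)) ` (PiE {..<T} (\<lambda>_. A))"
  proof
    fix s assume "s \<in> ?S"
    then obtain \<pi>' where s: "s = (\<Sum>t<T. u (\<pi>' (br (p t))) (x t))" and "\<forall>a\<in>A. \<pi>' a \<in> A"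
      by blast
    then have "restrict (\<lambda>t. \<pi>' (br (p t))) {..<T} \<in> PiE {..<T} (\<lambda>_. A)"
      using assms(2) by auto
    moreover have "s = (\<Sum>t<T. u (restrict (\<lambda>t. \<pi>' (br (p t))) {..<T} t) (x t))"
      using s by simp
    ultimately show "s \<in> (\<lambda>g. \<Sum>t<T. u (g t) (x t)) ` (PiE {..<T} (\<lambda>_. A))" by blast
  qed
  then have "finite ?S"
    by (rule finite_subset) (simp add: finite_PiE assms(1))
  moreover have "(\<Sum>t<T. u (\<pi> (br (p t))) (x t)) \<in> ?S"
    using assms(3) by blast
  ultimately have "(\<Sum>t<T. u (\<pi> (br (p t))) (x t)) \<le> Max ?S"
    by (rule Max_ge)
  then show ?thesis
    unfolding agent_swap_reg_def by linarith
qed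

lemma cal2_le_agent_swap_reg_squared_loss_utility:
  fixes p x :: "nat \<Rightarrow> real"
  assumes "\<forall>t<T. x t = 0 \<or> x t = 1" and "finite A"
    and forecasts: "p ` {..<T} \<subseteq> A"
    and frequencies: "empirical_frequency p x T ` p ` {..<T} \<subseteq> A"
    and br: "\<forall>t<T. is_best_response A squared_loss_utility (p t) (br (p t))"
  shows "cal2 p x T \<le> agent_swap_reg A squared_loss_utility br p x T"
proof -
  let ?fr = "empirical_frequency p x T"
  define \<pi> where "\<pi> = (\<lambda>a. if a \<in> p ` {..<T} then ?fr a else a)"
  have br_p: "br (p t) = p t" if "t < T" for t
    using that br forecasts by (intro best_response_squared_loss_utility[of _ A]) auto
  have "cal2 p x T = (\<Sum>t<T. (p t - x t)^2 - (?fr (p t) - x t)^2)"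
    using sum_sq_diff_empirical_frequency_eq_cal2[OF assms(1)] by simp
  also have "\<dots> = (\<Sum>t<T. squared_loss_utility (\<pi> (br (p t))) (x t))
      - (\<Sum>t<T. squared_loss_utility (br (p t)) (x t))"
    unfolding sum_subtractf[symmetric]
    by (rule sum.cong) (auto simp: br_p \<pi>_def squared_loss_utility_def)
  also have "\<dots> \<le> agent_swap_reg A squared_loss_utility br p x T"
    using \<open>finite A\<close> forecasts frequencies
    by (intro agent_swap_reg_ge_swap) (auto simp: br_p \<pi>_def)
  finally show ?thesis .
qed

theorem theorem4p12:
  fixes T :: nat and p x :: "nat \<Rightarrow> real"
  assumes "\<forall>t<T. 0 \<le> p t \<and> p t \<le> 1"
    and "\<forall>t<T. x t = 0 \<or> x t = 1"
  shows "\<exists>(A :: real set) (u :: real \<Rightarrow> real \<Rightarrow> real).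
           finite A \<and> A \<noteq> {} \<and>
           (\<forall>a\<in>A. \<bar>u a 0\<bar> \<le> 1 \<and> \<bar>u a 1\<bar> \<le> 1) \<and>
           (\<forall>br. (\<forall>q. 0 \<le> q \<and> q \<le> 1 \<longrightarrow> is_best_response A u q (br q)) \<longrightarrow>
                 agent_swap_reg A u br p x T \<ge> cal2 p x T)"
proof -
  \<comment> \<open>The action 0 only keeps A nonempty when T = 0.\<close>
  define A where "A = insert 0 (p ` {..<T} \<union> empirical_frequency p x T ` p ` {..<T})"
  have "finite A" "A \<noteq> {}"
    by (simp_all add: A_def)
  moreover have "\<forall>a\<in>A. \<bar>squared_loss_utility a 0\<bar> \<le> 1 \<and> \<bar>squared_loss_utility a 1\<bar> \<le> 1"
    using assms(1) empirical_frequency_nonneg empirical_frequency_le_1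
    by (auto simp: A_def abs_squared_loss_utility_le_1)
  moreover have "agent_swap_reg A squared_loss_utility br p x T \<ge> cal2 p x T"
    if "\<forall>q. 0 \<le> q \<and> q \<le> 1 \<longrightarrow> is_best_response A squared_loss_utility q (br q)" for br
    using that assms \<open>finite A\<close>
    by (intro cal2_le_agent_swap_reg_squared_loss_utility) (auto simp: A_def)
  ultimately show ?thesis
    by blast
qed

end
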